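(* Let $\mathcal{B}$ be a $\sigma$-algebra on a nonempty set $E$. Every $\sigma$-maxitive measure of bounded variation on $\mathcal{B}$ is finite and essential.
   Context: A $\sigma$-maxitive measure on $\mathcal{B}$ is a map $\nu:\mathcal{B}\to[0,\infty]$ with $\nu(\emptyset)=0$, $\nu(B\cup B')=\max(\nu(B),\nu(B'))$ for all $B,B'\in\mathcal{B}$, and $\nu(\bigcup_nB_n)=\lim_n\nu(B_n)$ for every nondecreasing sequence $(B_n)$ in $\mathcal{B}$. It is of bounded variation if $|\nu|:=\sup_\pi\sum_{B\in\pi}\nu(B)<\infty$, the supremum being over all finite partitions $\pi$ of $E$ into elements of $\mathcal{B}$. It is finite if $\nu(B)<\infty$ for all $B\in\mathcal{B}$, and essential if there is a $\sigma$-finite $\sigma$-additive measure $m$ on $\mathcal{B}$ with $\nu(B)>0\iff m(B)>0$ for all $B\in\mathcal{B}$. *)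

theory Defs
  imports "HOL-Analysis.Analysis"
begin

definition sigma_maxitive :: "'a set \<Rightarrow> 'a set set \<Rightarrow> ('a set \<Rightarrow> ennreal) \<Rightarrow> bool" where
  "sigma_maxitive E \<B> \<nu> \<longleftrightarrow>
     \<nu> {} = 0 \<and>
     (\<forall>B\<in>\<B>. \<forall>B'\<in>\<B>. \<nu> (B \<union> B') = max (\<nu> B) (\<nu> B')) \<and>
     (\<forall>Bs :: nat \<Rightarrow> 'a set. range Bs \<subseteq> \<B> \<longrightarrow> incseq Bs \<longrightarrow>
        (\<lambda>n. \<nu> (Bs n)) \<longlonglongrightarrow> \<nu> (\<Union>n. Bs n))"

definition finite_partitions :: "'a set \<Rightarrow> 'a set set \<Rightarrow> 'a set set set" where
  "finite_partitions E \<B> =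
     {\<pi>. finite \<pi> \<and> \<pi> \<subseteq> \<B> \<and> disjoint \<pi> \<and> \<Union>\<pi> = E}"

definition total_variation :: "'a set \<Rightarrow> 'a set set \<Rightarrow> ('a set \<Rightarrow> ennreal) \<Rightarrow> ennreal" where
  "total_variation E \<B> \<nu> = (SUP \<pi>\<in>finite_partitions E \<B>. \<Sum>B\<in>\<pi>. \<nu> B)"

definition bounded_variation :: "'a set \<Rightarrow> 'a set set \<Rightarrow> ('a set \<Rightarrow> ennreal) \<Rightarrow> bool" where
  "bounded_variation E \<B> \<nu> \<longleftrightarrow> total_variation E \<B> \<nu> < \<infinity>"

definition finite_maxitive :: "'a set set \<Rightarrow> ('a set \<Rightarrow> ennreal) \<Rightarrow> bool" where
  "finite_maxitive \<B> \<nu> \<longleftrightarrow> (\<forall>B\<in>\<B>. \<nu> B < \<infinity>)"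

definition essential :: "'a set \<Rightarrow> 'a set set \<Rightarrow> ('a set \<Rightarrow> ennreal) \<Rightarrow> bool" where
  "essential E \<B> \<nu> \<longleftrightarrow>
     (\<exists>m. measure_space E \<B> m \<and> sigma_finite_measure (measure_of E \<B> m) \<and>
          (\<forall>B\<in>\<B>. \<nu> B > 0 \<longleftrightarrow> m B > 0))"

end

theory Submission
  imports Defs
begin

text \<open>
  For \<open>\<epsilon> > 0\<close> let \<open>p\<^sub>\<epsilon> X\<close> be the largest number of pairwise disjoint measurable subsets of \<open>X\<close>
  of \<open>\<nu>\<close>-mass \<open>> \<epsilon>\<close>; bounded variation bounds it by \<open>|\<nu>| / \<epsilon>\<close>. Maxitivity makes \<open>p\<^sub>\<epsilon>\<close>
  finitely additive, and \<open>\<sigma>\<close>-maxitivity makes it continuous at \<open>{}\<close>, so \<open>p\<^sub>\<epsilon>\<close> is a finite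
  measure vanishing exactly on the sets with \<open>\<nu> X \<le> \<epsilon>\<close>. The series
  \<open>\<Sum>\<^sub>n 2\<^sup>-\<^sup>n p\<^sub>\<epsilon>\<^sub>n / (|\<nu>|/\<epsilon>\<^sub>n + 1)\<close> with \<open>\<epsilon>\<^sub>n = 1/(n+1)\<close> is then a finite measure
  with the same null sets as \<open>\<nu>\<close>.
\<close>

lemma ennreal_suminf_swap:
  fixes f :: "nat \<Rightarrow> nat \<Rightarrow> ennreal"
  shows "(\<Sum>i. \<Sum>n. f i n) = (\<Sum>n. \<Sum>i. f i n)"
proof -
  have "(\<Sum>i. \<Sum>n. f i n) = (\<Sum>i. \<integral>\<^sup>+n. f i n \<partial>count_space UNIV)"
    by (simp add: nn_integral_count_space_nat)
  also have "\<dots> = (\<integral>\<^sup>+n. (\<Sum>i. f i n) \<partial>count_space UNIV)"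
    by (rule nn_integral_suminf[symmetric]) auto
  also have "\<dots> = (\<Sum>n. \<Sum>i. f i n)"
    by (simp add: nn_integral_count_space_nat)
  finally show ?thesis .
qed

lemma countably_additive_suminf:
  fixes f :: "nat \<Rightarrow> 'a set \<Rightarrow> ennreal"
  assumes "\<And>n. countably_additive M (f n)"
  shows "countably_additive M (\<lambda>X. \<Sum>n. f n X)"
proof (rule countably_additiveI)
  fix A :: "nat \<Rightarrow> 'a set"
  assume A: "range A \<subseteq> M" "disjoint_family A" "(\<Union>i. A i) \<in> M"
  have "(\<Sum>i. \<Sum>n. f n (A i)) = (\<Sum>n. \<Sum>i. f n (A i))"
    by (rule ennreal_suminf_swap)
  also have "\<dots> = (\<Sum>n. f n (\<Union>i. A i))"
    using assms A by (simp add: countably_additive_def)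
  finally show "(\<Sum>i. \<Sum>n. f n (A i)) = (\<Sum>n. f n (\<Union>i. A i))" .
qed

locale maxitive_bounded_variation =
  fixes E :: "'a set" and \<B> :: "'a set set" and \<nu> :: "'a set \<Rightarrow> ennreal"
  assumes sigma_algebra: "sigma_algebra E \<B>"
    and sigma_maxitive: "sigma_maxitive E \<B> \<nu>"
    and bounded_variation: "bounded_variation E \<B> \<nu>"
begin

interpretation sigma_algebra E \<B> by (rule sigma_algebra)

lemma nu_empty: "\<nu> {} = 0"
  using sigma_maxitive by (simp add: sigma_maxitive_def)

lemma nu_Un: "B \<in> \<B> \<Longrightarrow> B' \<in> \<B> \<Longrightarrow> \<nu> (B \<union> B') = max (\<nu> B) (\<nu> B')"
  using sigma_maxitive by (simp add: sigma_maxitive_def)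

lemma nu_incseq_tendsto:
  "range Bs \<subseteq> \<B> \<Longrightarrow> incseq Bs \<Longrightarrow> (\<lambda>n. \<nu> (Bs n)) \<longlonglongrightarrow> \<nu> (\<Union>n. Bs n)"
  using sigma_maxitive by (simp add: sigma_maxitive_def)

lemma nu_mono:
  assumes "B \<in> \<B>" "B' \<in> \<B>" "B \<subseteq> B'"
  shows "\<nu> B \<le> \<nu> B'"
proof -
  have "B' = B \<union> (B' - B)" using assms by auto
  then have "\<nu> B' = max (\<nu> B) (\<nu> (B' - B))" using nu_Un assms by (metis Diff)
  then show ?thesis by simp
qed

abbreviation "TV \<equiv> total_variation E \<B> \<nu>"

lemma total_variation_finite: "TV < \<infinity>"
  using bounded_variation by (simp add: bounded_variation_def)

lemma sum_le_total_variation: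
  assumes F: "finite F" "F \<subseteq> \<B>" "disjoint F"
  shows "(\<Sum>C\<in>F. \<nu> C) \<le> TV"
proof -
  define R where "R = E - \<Union>F"
  have "R \<in> \<B>" unfolding R_def using F by (intro Diff top finite_Union) auto
  moreover have "\<Union>(insert R F) = E" using F sets_into_space unfolding R_def by auto
  moreover have "disjoint (insert R F)" using F(3) unfolding disjoint_def R_def by auto
  ultimately have "insert R F \<in> finite_partitions E \<B>"
    using F by (simp add: finite_partitions_def)
  then have "(\<Sum>C\<in>insert R F. \<nu> C) \<le> TV"
    unfolding total_variation_def by (rule SUP_upper)
  moreover have "(\<Sum>C\<in>F. \<nu> C) \<le> (\<Sum>C\<in>insert R F. \<nu> C)"
    by (rule sum_mono2) (use F in auto)
  ultimately show ?thesis by simp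
qed

lemma nu_finite: "B \<in> \<B> \<Longrightarrow> \<nu> B < \<infinity>"
proof -
  assume B: "B \<in> \<B>"
  have "\<nu> B \<le> \<nu> E" using nu_mono[OF B top] sets_into_space B by auto
  also have "\<nu> E \<le> TV" using sum_le_total_variation[of "{E}"] by simp
  finally show ?thesis using total_variation_finite by auto
qed

definition large_families :: "real \<Rightarrow> 'a set \<Rightarrow> 'a set set set" where
  "large_families \<epsilon> X =
     {F. finite F \<and> F \<subseteq> \<B> \<and> disjoint F \<and> (\<forall>C\<in>F. C \<subseteq> X \<and> ennreal \<epsilon> < \<nu> C)}"

definition large_count_bound :: "real \<Rightarrow> nat" where
  "large_count_bound \<epsilon> = nat \<lceil>enn2real TV / \<epsilon>\<rceil>"

definition large_count :: "real \<Rightarrow> 'a set \<Rightarrow> nat" where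
  "large_count \<epsilon> X = Max (card ` large_families \<epsilon> X)"

lemma large_family_nonempty_members:
  "F \<in> large_families \<epsilon> X \<Longrightarrow> C \<in> F \<Longrightarrow> C \<noteq> {}"
  using nu_empty by (auto simp: large_families_def)

lemma card_large_family_le_bound:
  assumes \<epsilon>: "\<epsilon> > 0" and F: "F \<in> large_families \<epsilon> X"
  shows "card F \<le> large_count_bound \<epsilon>"
proof -
  obtain t where t: "TV = ennreal t" "t \<ge> 0"
    using total_variation_finite by (cases TV) auto
  have F': "finite F" "F \<subseteq> \<B>" "disjoint F" "\<And>C. C \<in> F \<Longrightarrow> ennreal \<epsilon> < \<nu> C"
    using F by (auto simp: large_families_def)
  have "ennreal (real (card F) * \<epsilon>) = (\<Sum>C\<in>F. ennreal \<epsilon>)"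
    using \<epsilon> by (simp add: ennreal_mult ennreal_of_nat_eq_real_of_nat)
  also have "\<dots> \<le> (\<Sum>C\<in>F. \<nu> C)" by (intro sum_mono less_imp_le F')
  also have "\<dots> \<le> TV" by (rule sum_le_total_variation) (use F' in auto)
  finally have "real (card F) \<le> t / \<epsilon>"
    using t \<epsilon> by (simp add: field_simps)
  then show ?thesis
    unfolding large_count_bound_def using t by (simp add: le_nat_iff) linarith
qed

lemma finite_large_family_cards: "\<epsilon> > 0 \<Longrightarrow> finite (card ` large_families \<epsilon> X)"
  by (rule finite_subset[of _ "{..large_count_bound \<epsilon>}"]) (auto dest: card_large_family_le_bound)

lemma card_le_large_count: "\<epsilon> > 0 \<Longrightarrow> F \<in> large_families \<epsilon> X \<Longrightarrow> card F \<le> large_count \<epsilon> X"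
  unfolding large_count_def by (rule Max_ge) (auto simp: finite_large_family_cards)

lemma large_count_attained:
  assumes "\<epsilon> > 0"
  obtains F where "F \<in> large_families \<epsilon> X" "card F = large_count \<epsilon> X"
proof -
  have "{} \<in> large_families \<epsilon> X" by (simp add: large_families_def)
  then have "large_count \<epsilon> X \<in> card ` large_families \<epsilon> X"
    unfolding large_count_def using finite_large_family_cards[OF assms] by (intro Max_in) auto
  then show ?thesis using that by force
qed

lemma large_count_le_bound:
  assumes \<epsilon>: "\<epsilon> > 0"
  shows "large_count \<epsilon> X \<le> large_count_bound \<epsilon>"
proof -
  obtain F where "F \<in> large_families \<epsilon> X" "card F = large_count \<epsilon> X"
    using large_count_attained[OF \<epsilon>] .
  then show ?thesis using card_large_family_le_bound[OF \<epsilon>] by metis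
qed

lemma large_count_mono:
  assumes \<epsilon>: "\<epsilon> > 0" and "X \<subseteq> Y"
  shows "large_count \<epsilon> X \<le> large_count \<epsilon> Y"
proof -
  obtain F where F: "F \<in> large_families \<epsilon> X" "card F = large_count \<epsilon> X"
    using large_count_attained[OF \<epsilon>] .
  then have "F \<in> large_families \<epsilon> Y"
    using \<open>X \<subseteq> Y\<close> by (auto simp: large_families_def)
  then show ?thesis using F(2) card_le_large_count[OF \<epsilon>] by metis
qed

lemma large_count_pos_iff:
  assumes \<epsilon>: "\<epsilon> > 0" and X: "X \<in> \<B>"
  shows "large_count \<epsilon> X > 0 \<longleftrightarrow> ennreal \<epsilon> < \<nu> X"
proof
  assume "large_count \<epsilon> X > 0"
  then obtain F where F: "F \<in> large_families \<epsilon> X" "card F > 0"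
    using large_count_attained[OF \<epsilon>, of X] by metis
  then obtain C where "C \<in> F" by fastforce
  then have "ennreal \<epsilon> < \<nu> C" "C \<subseteq> X" "C \<in> \<B>" using F by (auto simp: large_families_def)
  then show "ennreal \<epsilon> < \<nu> X" using nu_mono[OF _ X] by (meson order_less_le_trans)
next
  assume "ennreal \<epsilon> < \<nu> X"
  then have "{X} \<in> large_families \<epsilon> X" using X by (simp add: large_families_def)
  from card_le_large_count[OF \<epsilon> this] show "large_count \<epsilon> X > 0" by simp
qed

lemma large_count_empty: "\<epsilon> > 0 \<Longrightarrow> large_count \<epsilon> {} = 0"
  using large_count_pos_iff[of \<epsilon> "{}"] nu_empty by auto

lemma large_count_superadditive:
  assumes \<epsilon>: "\<epsilon> > 0" and XY: "X \<inter> Y = {}"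
  shows "large_count \<epsilon> X + large_count \<epsilon> Y \<le> large_count \<epsilon> (X \<union> Y)"
proof -
  obtain F1 where F1: "F1 \<in> large_families \<epsilon> X" "card F1 = large_count \<epsilon> X"
    using large_count_attained[OF \<epsilon>] by blast
  obtain F2 where F2: "F2 \<in> large_families \<epsilon> Y" "card F2 = large_count \<epsilon> Y"
    using large_count_attained[OF \<epsilon>] by blast
  have "\<Union>F1 \<inter> \<Union>F2 = {}" using F1(1) F2(1) XY unfolding large_families_def by blast
  then have "F1 \<inter> F2 = {}" using large_family_nonempty_members[OF F1(1)] by blast
  moreover have "F1 \<union> F2 \<in> large_families \<epsilon> (X \<union> Y)"
    using F1(1) F2(1) \<open>\<Union>F1 \<inter> \<Union>F2 = {}\<close> by (auto simp: large_families_def intro: disjoint_union)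
  ultimately show ?thesis
    using F1 F2 card_le_large_count[OF \<epsilon>, of "F1 \<union> F2"]
    by (simp add: large_families_def card_Un_disjoint)
qed

lemma card_large_traces_le_large_count:
  assumes \<epsilon>: "\<epsilon> > 0" and F: "finite F" "F \<subseteq> \<B>" "disjoint F" and Z: "Z \<in> \<B>"
  shows "card {C\<in>F. ennreal \<epsilon> < \<nu> (C \<inter> Z)} \<le> large_count \<epsilon> Z"
proof -
  let ?G = "{C\<in>F. ennreal \<epsilon> < \<nu> (C \<inter> Z)}"
  have "disjoint ?G" using F(3) by (auto simp: pairwise_def)
  then have traces: "(\<lambda>C. C \<inter> Z) ` ?G \<in> large_families \<epsilon> Z"
    using F Z by (auto simp: large_families_def intro: disjoint_image_subset)
  have "inj_on (\<lambda>C. C \<inter> Z) ?G"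
  proof (rule inj_onI)
    fix C C' assume C: "C \<in> ?G" "C' \<in> ?G" "C \<inter> Z = C' \<inter> Z"
    then have "C \<inter> Z \<noteq> {}" using nu_empty by auto
    then show "C = C'" using C F(3) by (auto simp: disjoint_def)
  qed
  then show ?thesis using card_le_large_count[OF \<epsilon> traces] by (simp add: card_image)
qed

lemma large_count_subadditive:
  assumes \<epsilon>: "\<epsilon> > 0" and X: "X \<in> \<B>" and Y: "Y \<in> \<B>"
  shows "large_count \<epsilon> (X \<union> Y) \<le> large_count \<epsilon> X + large_count \<epsilon> Y"
proof -
  obtain F where F: "F \<in> large_families \<epsilon> (X \<union> Y)" "card F = large_count \<epsilon> (X \<union> Y)"
    using large_count_attained[OF \<epsilon>] by blast
  have F': "finite F" "F \<subseteq> \<B>" "disjoint F"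
    "\<And>C. C \<in> F \<Longrightarrow> C \<subseteq> X \<union> Y \<and> ennreal \<epsilon> < \<nu> C"
    using F by (auto simp: large_families_def)
  \<comment> \<open>By maxitivity every member of \<open>F\<close> keeps mass \<open>> \<epsilon>\<close> inside \<open>X\<close> or inside \<open>Y\<close>.\<close>
  have "F = {C\<in>F. ennreal \<epsilon> < \<nu> (C \<inter> X)} \<union> {C\<in>F. ennreal \<epsilon> < \<nu> (C \<inter> Y)}"
  proof safe
    fix C assume C: "C \<in> F" "\<not> ennreal \<epsilon> < \<nu> (C \<inter> Y)"
    have "C = (C \<inter> X) \<union> (C \<inter> Y)" using F'(4)[OF C(1)] by auto
    then have "\<nu> C = max (\<nu> (C \<inter> X)) (\<nu> (C \<inter> Y))"
      using nu_Un F'(2) C(1) X Y by (metis Int subsetD)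
    then show "ennreal \<epsilon> < \<nu> (C \<inter> X)"
      using F'(4)[OF C(1)] C(2) by (auto simp: less_max_iff_disj)
  qed
  then have "card F \<le> card {C\<in>F. ennreal \<epsilon> < \<nu> (C \<inter> X)} + card {C\<in>F. ennreal \<epsilon> < \<nu> (C \<inter> Y)}"
    by (metis card_Un_le)
  also have "\<dots> \<le> large_count \<epsilon> X + large_count \<epsilon> Y"
    using card_large_traces_le_large_count[OF \<epsilon> F'(1-3)] X Y by (intro add_mono)
  finally show ?thesis using F by simp
qed

lemma large_count_additive:
  "\<epsilon> > 0 \<Longrightarrow> X \<in> \<B> \<Longrightarrow> Y \<in> \<B> \<Longrightarrow> X \<inter> Y = {} \<Longrightarrow>
    large_count \<epsilon> (X \<union> Y) = large_count \<epsilon> X + large_count \<epsilon> Y"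
  by (metis antisym large_count_subadditive large_count_superadditive)

lemma large_count_decseq_vanishes:
  assumes \<epsilon>: "\<epsilon> > 0" and A: "range A \<subseteq> \<B>" "decseq A" "(\<Inter>i. A i) = {}"
  shows "\<exists>N. \<forall>i\<ge>N. large_count \<epsilon> (A i) = 0"
proof -
  obtain N where N: "\<And>M. large_count \<epsilon> (A N) \<le> large_count \<epsilon> (A M)"
    using ex_has_least_nat[of "\<lambda>_. True" 0 "\<lambda>N. large_count \<epsilon> (A N)"] by blast
  have AN: "A N \<in> \<B>" using A(1) by auto
  have "large_count \<epsilon> (A N) = 0"
  proof (rule ccontr)
    assume "large_count \<epsilon> (A N) \<noteq> 0"
    then have "ennreal \<epsilon> < \<nu> (A N)" using large_count_pos_iff[OF \<epsilon> AN] by simp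
    moreover have "(\<lambda>M. \<nu> (A N - A M)) \<longlonglongrightarrow> \<nu> (A N)"
    proof -
      have "incseq (\<lambda>M. A N - A M)" using A(2) by (auto simp: incseq_def decseq_def)
      moreover have "(\<Union>M. A N - A M) = A N" using A(3) by auto
      moreover have "range (\<lambda>M. A N - A M) \<subseteq> \<B>" using A(1) by auto
      ultimately show ?thesis using nu_incseq_tendsto[of "\<lambda>M. A N - A M"] by simp
    qed
    ultimately obtain M where M: "ennreal \<epsilon> < \<nu> (A N - A M)"
      by (metis (lifting) order_tendstoD(1) eventually_sequentially order.refl)
    have AM: "A M \<in> \<B>" using A(1) by auto
    \<comment> \<open>Splitting off the piece \<open>A N - A M\<close> contradicts the minimality of the count at \<open>N\<close>.\<close>
    have "A N = (A N - A M) \<union> (A N \<inter> A M)" "(A N - A M) \<inter> (A N \<inter> A M) = {}"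
      by auto
    then have "large_count \<epsilon> (A N) = large_count \<epsilon> (A N - A M) + large_count \<epsilon> (A N \<inter> A M)"
      using large_count_additive[OF \<epsilon>] AN AM by (metis Diff Int)
    moreover have "large_count \<epsilon> (A N - A M) > 0"
      using M large_count_pos_iff[OF \<epsilon>] AN AM by (simp add: Diff)
    moreover have "A N \<inter> A M = A (max N M)"
      using decseqD[OF A(2), of N M] decseqD[OF A(2), of M N]
      by (cases "N \<le> M") (simp_all add: Int_absorb1 Int_absorb2 max_def)
    ultimately show False using N[of "max N M"] by simp
  qed
  then show ?thesis
    using large_count_mono[OF \<epsilon>] A(2) by (metis decseqD le_zero_eq)
qed

lemma large_count_countably_additive:
  assumes \<epsilon>: "\<epsilon> > 0"
  shows "countably_additive \<B> (\<lambda>X. of_nat (large_count \<epsilon> X) :: ennreal)"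
proof (rule empty_continuous_imp_countably_additive)
  show "positive \<B> (\<lambda>X. of_nat (large_count \<epsilon> X) :: ennreal)"
    using large_count_empty[OF \<epsilon>] by (simp add: positive_def)
  show "additive \<B> (\<lambda>X. of_nat (large_count \<epsilon> X) :: ennreal)"
    using large_count_additive[OF \<epsilon>] by (simp add: additive_def)
  fix A assume "range A \<subseteq> \<B>" "decseq A" "(\<Inter>i. A i) = {}"
  then show "(\<lambda>i. of_nat (large_count \<epsilon> (A i)) :: ennreal) \<longlonglongrightarrow> 0"
    using large_count_decseq_vanishes[OF \<epsilon>]
    by (auto intro: tendsto_eventually simp: eventually_sequentially)
qed simp

definition scale :: "nat \<Rightarrow> real" where
  "scale n = inverse (real (Suc n))"

definition weight :: "nat \<Rightarrow> real" where
  "weight n = (1/2) ^ n / (real (large_count_bound (scale n)) + 1)"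

definition dominating_measure :: "'a set \<Rightarrow> ennreal" where
  "dominating_measure X = (\<Sum>n. ennreal (weight n) * of_nat (large_count (scale n) X))"

lemma scale_pos: "scale n > 0"
  by (simp add: scale_def)

lemma weight_pos: "weight n > 0"
  by (simp add: weight_def)

lemma positive_dominating_measure: "positive \<B> dominating_measure"
  using large_count_empty[OF scale_pos] by (simp add: positive_def dominating_measure_def)

lemma dominating_measure_countably_additive: "countably_additive \<B> dominating_measure"
  unfolding dominating_measure_def
proof (rule countably_additive_suminf)
  fix n
  show "countably_additive \<B> (\<lambda>X. ennreal (weight n) * of_nat (large_count (scale n) X))"
    using large_count_countably_additive[OF scale_pos, of n]
    by (simp add: countably_additive_def)
qed

lemma dominating_measure_le_2: "dominating_measure X \<le> 2"
proof -
  have "ennreal (weight n) * of_nat (large_count (scale n) X) \<le> ennreal ((1/2) ^ n)" for n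
  proof -
    have "real (large_count (scale n) X) \<le> real (large_count_bound (scale n)) + 1"
      using large_count_le_bound[OF scale_pos, of n X] by simp
    then have "real (large_count (scale n) X) / (real (large_count_bound (scale n)) + 1) \<le> 1"
      by simp
    then have "(1/2) ^ n * (real (large_count (scale n) X) / (real (large_count_bound (scale n)) + 1))
        \<le> (1/2) ^ n"
      by (rule mult_left_le) simp
    then have "weight n * real (large_count (scale n) X) \<le> (1/2) ^ n"
      unfolding weight_def by simp
    then show ?thesis
      using weight_pos[of n] by (simp add: ennreal_mult[symmetric] ennreal_of_nat_eq_real_of_nat ennreal_leI)
  qed
  then have "dominating_measure X \<le> (\<Sum>n. ennreal ((1/2) ^ n))"
    unfolding dominating_measure_def by (intro suminf_le) auto
  also have "\<dots> = ennreal 2"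
    using geometric_sums[of "1/2 :: real"] by (intro suminf_ennreal_eq) auto
  finally show ?thesis by simp
qed

lemma dominating_measure_pos_iff:
  assumes X: "X \<in> \<B>"
  shows "dominating_measure X > 0 \<longleftrightarrow> \<nu> X > 0"
proof -
  have "dominating_measure X > 0 \<longleftrightarrow> (\<exists>n. large_count (scale n) X > 0)"
    unfolding dominating_measure_def
    by (subst suminf_pos_iff) (auto simp: weight_pos ennreal_zero_less_mult_iff)
  also have "\<dots> \<longleftrightarrow> (\<exists>n. ennreal (scale n) < \<nu> X)"
    using large_count_pos_iff[OF scale_pos X] by simp
  also have "\<dots> \<longleftrightarrow> \<nu> X > 0"
  proof
    assume "\<exists>n. ennreal (scale n) < \<nu> X"
    then show "\<nu> X > 0" using le_less_trans[OF zero_le] by blast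
  next
    assume pos: "\<nu> X > 0"
    show "\<exists>n. ennreal (scale n) < \<nu> X"
    proof (cases "\<nu> X")
      case (real r)
      then obtain n where "inverse (real (Suc n)) < r"
        using pos reals_Archimedean[of r] by auto
      then show ?thesis
        using real pos unfolding scale_def by (auto intro: ennreal_lessI)
    qed (simp add: scale_def)
  qed
  finally show ?thesis .
qed

lemma finite_measure_dominating_measure: "finite_measure (measure_of E \<B> dominating_measure)"
proof (rule finite_measureI)
  let ?M = "measure_of E \<B> dominating_measure"
  have "emeasure ?M E = dominating_measure E"
    by (rule emeasure_measure_of_sigma[OF sigma_algebra positive_dominating_measure
          dominating_measure_countably_additive top])
  moreover have "space ?M = E"
    using sets_into_space by (simp add: space_measure_of_conv)
  ultimately show "emeasure ?M (space ?M) \<noteq> \<infinity>"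
    using dominating_measure_le_2[of E] by (auto simp: top_unique)
qed

lemma nu_essential: "essential E \<B> \<nu>"
  unfolding essential_def
proof (intro exI conjI ballI)
  show "measure_space E \<B> dominating_measure"
    using sigma_algebra positive_dominating_measure dominating_measure_countably_additive
    by (simp add: measure_space_def)
  show "sigma_finite_measure (measure_of E \<B> dominating_measure)"
    using finite_measure_dominating_measure by (rule finite_measure.axioms)
qed (simp add: dominating_measure_pos_iff)

end

theorem proposition3p5:
  fixes E :: "'a set" and \<B> :: "'a set set" and \<nu> :: "'a set \<Rightarrow> ennreal"
  assumes "E \<noteq> {}"
    and "sigma_algebra E \<B>"
    and "sigma_maxitive E \<B> \<nu>"
    and "bounded_variation E \<B> \<nu>"
  shows "finite_maxitive \<B> \<nu> \<and> essential E \<B> \<nu>"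
proof -
  interpret maxitive_bounded_variation E \<B> \<nu>
    using assms(2-4) by (rule maxitive_bounded_variation.intro)
  show ?thesis
    using nu_finite nu_essential by (simp add: finite_maxitive_def)
qed

end
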